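(* Let $A\subseteq Q_n$ be an extremal set for which there exist $t\in Q_n$ and an integer $r$ such that $B(t,r)\subseteq A\subseteq B(t,r+1)$. Then $A$ is isomorphic to an initial segment of the simplicial order.
   Context: $Q_n$ is the hypercube with vertex set the power set of $[n]=\{1,\dots,n\}$ and metric $d(x,y)=|x\Delta y|$; $B(x,\rho)=\{y: d(x,y)\le\rho\}$. For $A\subseteq Q_n$ and $t>0$, $N^t(A)=\{x:\min_{y\in A}d(x,y)\le t\}$; $N^t(A)$ is minimal if $|N^t(A)|\le|N^t(B)|$ for all $B$ with $|B|=|A|$. $A$ is extremal if $N^t(A)$ and $N^t(Q_n\setminus A)$ are minimal for all integers $t>0$. The lexicographic order on $r$-subsets: $A<_{lex}B$ iff $\min(A\Delta B)\in A$. The simplicial order on $Q_n$: $A<_{sim}B$ iff $|A|<|B|$, or $|A|=|B|$ and $A<_{lex}B$. Two subsets of $Q_n$ are isomorphic if one is the image of the other under an automorphism of $Q_n$ (a map $x\mapsto\sigma(x)\Delta I$ with $\sigma$ a permutation of $[n]$ and $I\subseteq[n]$). *)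

theory Defs
  imports "HOL-Combinatorics.Permutations"
begin

definition cube :: "nat \<Rightarrow> nat set set" where
  "cube n = Pow {1..n}"

definition symdiff :: "nat set \<Rightarrow> nat set \<Rightarrow> nat set" where
  "symdiff x y = (x - y) \<union> (y - x)"

definition hdist :: "nat set \<Rightarrow> nat set \<Rightarrow> nat" where
  "hdist x y = card (symdiff x y)"

definition hball :: "nat \<Rightarrow> nat set \<Rightarrow> int \<Rightarrow> nat set set" where
  "hball n x \<rho> = {y \<in> cube n. int (hdist x y) \<le> \<rho>}"

definition nbhd :: "nat \<Rightarrow> nat \<Rightarrow> nat set set \<Rightarrow> nat set set" where
  "nbhd n t A = {x \<in> cube n. \<exists>y\<in>A. hdist x y \<le> t}"

definition nbhd_minimal :: "nat \<Rightarrow> nat \<Rightarrow> nat set set \<Rightarrow> bool" where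
  "nbhd_minimal n t A =
     (\<forall>B. B \<subseteq> cube n \<longrightarrow> card B = card A \<longrightarrow> card (nbhd n t A) \<le> card (nbhd n t B))"

definition extremal :: "nat \<Rightarrow> nat set set \<Rightarrow> bool" where
  "extremal n A = (A \<subseteq> cube n \<and>
     (\<forall>t::nat. t > 0 \<longrightarrow> nbhd_minimal n t A \<and> nbhd_minimal n t (cube n - A)))"

definition lex_less :: "nat set \<Rightarrow> nat set \<Rightarrow> bool" where
  "lex_less A B = (A \<noteq> B \<and> Min (symdiff A B) \<in> A)"

definition sim_less :: "nat set \<Rightarrow> nat set \<Rightarrow> bool" where
  "sim_less A B = (card A < card B \<or> (card A = card B \<and> lex_less A B))"

definition sim_initial_segment :: "nat \<Rightarrow> nat set set \<Rightarrow> bool" where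
  "sim_initial_segment n S =
     (S \<subseteq> cube n \<and> (\<forall>x\<in>S. \<forall>y\<in>cube n. sim_less y x \<longrightarrow> y \<in> S))"

definition cube_aut :: "nat \<Rightarrow> (nat set \<Rightarrow> nat set) \<Rightarrow> bool" where
  "cube_aut n f = (\<exists>\<sigma> I. \<sigma> permutes {1..n} \<and> I \<subseteq> {1..n} \<and>
                      (\<forall>x. f x = symdiff (\<sigma> ` x) I))"

definition cube_isomorphic :: "nat \<Rightarrow> nat set set \<Rightarrow> nat set set \<Rightarrow> bool" where
  "cube_isomorphic n A B = (\<exists>f. cube_aut n f \<and> f ` A = B)"

end

theory Submission
  imports Defs
begin

text \<open>
  Translating by t we may assume t = {}. Then A consists of all vertices of size less than
  k = r + 1 together with a family L of k-sets, and N^s(A) consists of all vertices of size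
  less than k + s together with the upper shadow of L on level k + s. Hence minimality of
  N^s(A) for all s says that L has the smallest upper shadows on all levels among families of
  k-sets of its size; dually, minimality of N^s(Q_n - A) says the same for the lower shadows of
  the k-sets not in L. Such an L has an element common to all its members or contains every
  k-set through some element: otherwise, if L is no larger than the star of an element a, its
  upper shadow on level n - 1 has n members while that of a family of the same size inside the
  star has at most n - 1; if L is larger, the same count applies to the lower shadows on
  level 1 of its complement and of a family avoiding a. Removing that element preserves both
  minimality properties, so by induction on the ground set L becomes an initial segment of the
  lexicographic order after a relabelling, and then A is an initial segment of the simplicial
  order.
\<close>

definition layer :: "nat \<Rightarrow> 'a set \<Rightarrow> 'a set set" where
  "layer k X = {x. x \<subseteq> X \<and> card x = k}"

definition upper_shadow :: "'a set \<Rightarrow> nat \<Rightarrow> 'a set set \<Rightarrow> 'a set set" where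
  "upper_shadow X j F = {y \<in> layer j X. \<exists>x\<in>F. x \<subseteq> y}"

definition lower_shadow :: "nat \<Rightarrow> 'a set set \<Rightarrow> 'a set set" where
  "lower_shadow j F = {y. card y = j \<and> (\<exists>x\<in>F. y \<subseteq> x)}"

definition min_upper_shadows :: "'a set \<Rightarrow> nat \<Rightarrow> 'a set set \<Rightarrow> bool" where
  "min_upper_shadows X k L \<longleftrightarrow> (\<forall>j L'. L' \<subseteq> layer k X \<longrightarrow> card L' = card L \<longrightarrow>
     card (upper_shadow X j L) \<le> card (upper_shadow X j L'))"

definition min_lower_shadows :: "'a set \<Rightarrow> nat \<Rightarrow> 'a set set \<Rightarrow> bool" where
  "min_lower_shadows X k M \<longleftrightarrow> (\<forall>j M'. M' \<subseteq> layer k X \<longrightarrow> card M' = card M \<longrightarrow>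
     card (lower_shadow j M) \<le> card (lower_shadow j M'))"

definition lex_initial :: "nat set \<Rightarrow> nat \<Rightarrow> nat set set \<Rightarrow> bool" where
  "lex_initial Y k F \<longleftrightarrow> F \<subseteq> layer k Y \<and> (\<forall>x\<in>F. \<forall>y\<in>layer k Y. lex_less y x \<longrightarrow> y \<in> F)"

section \<open>Layers and shadows\<close>

lemma finite_layer: "finite X \<Longrightarrow> finite (layer k X)"
  unfolding layer_def by (rule finite_subset[of _ "Pow X"]) auto

lemma layer_mono: "X' \<subseteq> X \<Longrightarrow> layer k X' \<subseteq> layer k X"
  unfolding layer_def by auto

lemma layer_0_subset: "finite X \<Longrightarrow> layer 0 X \<subseteq> {{}}"
  unfolding layer_def by (auto dest: finite_subset)

lemma layer_subset_singleton: "finite X \<Longrightarrow> card X \<le> k \<Longrightarrow> layer k X \<subseteq> {X}"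
  unfolding layer_def by (auto dest: card_seteq)

lemma layer_insert:
  assumes "finite X" "i \<notin> X"
  shows "layer (Suc k) (insert i X) = layer (Suc k) X \<union> insert i ` layer k X"
proof (intro equalityI subsetI)
  fix y assume y: "y \<in> layer (Suc k) (insert i X)"
  show "y \<in> layer (Suc k) X \<union> insert i ` layer k X"
  proof (cases "i \<in> y")
    case True
    have "finite y" using y assms(1) finite_subset[of y "insert i X"] unfolding layer_def by auto
    then have "y - {i} \<in> layer k X" using y True unfolding layer_def by auto
    moreover have "y = insert i (y - {i})" using True by blast
    ultimately show ?thesis by blast
  next
    case False
    then show ?thesis using y unfolding layer_def by blast
  qed
next
  fix y assume y: "y \<in> layer (Suc k) X \<union> insert i ` layer k X"
  show "y \<in> layer (Suc k) (insert i X)"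
  proof (cases "y \<in> layer (Suc k) X")
    case True
    then show ?thesis using layer_mono[of X "insert i X"] by blast
  next
    case False
    then obtain x where x: "x \<subseteq> X" "card x = k" "y = insert i x" using y unfolding layer_def by blast
    then have "finite x" "i \<notin> x" using assms finite_subset by blast+
    then show ?thesis using x unfolding layer_def by auto
  qed
qed

lemma inj_on_insert_Pow: "i \<notin> X \<Longrightarrow> inj_on (insert i) (Pow X)"
  by (rule inj_onI) (metis Diff_insert_absorb PowD in_mono)

lemma card_insert_image: "F \<subseteq> Pow X \<Longrightarrow> i \<notin> X \<Longrightarrow> card (insert i ` F) = card F"
  by (meson card_image inj_on_insert_Pow inj_on_subset)

lemma image_layer:
  assumes "bij_betw s X Y"
  shows "image s ` layer k X = layer k Y"
proof -
  have Pow: "image s ` Pow X = Pow Y"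
    using assms by (simp add: bij_betw_def image_Pow_surj)
  have card: "card (s ` x) = card x" if "x \<subseteq> X" for x
    using assms that by (metis bij_betw_def card_image inj_on_subset)
  show ?thesis
  proof (intro equalityI subsetI)
    fix y assume "y \<in> image s ` layer k X"
    then obtain x where "x \<subseteq> X" "card x = k" "y = s ` x" unfolding layer_def by blast
    moreover have "s ` x \<in> Pow Y" using Pow \<open>x \<subseteq> X\<close> by blast
    ultimately show "y \<in> layer k Y" using card unfolding layer_def by simp
  next
    fix y assume y: "y \<in> layer k Y"
    then have "y \<in> image s ` Pow X" using Pow unfolding layer_def by simp
    then obtain x where "x \<subseteq> X" "y = s ` x" by blast
    then show "y \<in> image s ` layer k X" using y card unfolding layer_def by auto
  qed
qed

lemma image_layer_star:
  assumes "bij_betw s X Y" "i \<in> X"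
  shows "image s ` {x \<in> layer k X. i \<in> x} = {y \<in> layer k Y. s i \<in> y}"
proof -
  have "s i \<in> s ` x \<longleftrightarrow> i \<in> x" if "x \<in> layer k X" for x
    using assms that inj_on_image_mem_iff[of s X i x] unfolding layer_def bij_betw_def by blast
  then have "image s ` {x \<in> layer k X. i \<in> x} = {y \<in> image s ` layer k X. s i \<in> y}"
    by auto
  then show ?thesis using image_layer[OF assms(1)] by simp
qed

lemma finite_upper_shadow: "finite X \<Longrightarrow> finite (upper_shadow X j F)"
  unfolding upper_shadow_def by (simp add: finite_layer)

lemma lower_shadow_Pow: "F \<subseteq> Pow X \<Longrightarrow> lower_shadow j F \<subseteq> Pow X"
  unfolding lower_shadow_def by blast

lemma finite_lower_shadow: "finite X \<Longrightarrow> F \<subseteq> Pow X \<Longrightarrow> finite (lower_shadow j F)"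
  by (meson finite_Pow_iff finite_subset lower_shadow_Pow)

lemma upper_shadow_below:
  assumes "finite X" "F \<subseteq> layer k X" "j < k"
  shows "upper_shadow X j F = {}"
proof -
  have "\<not> x \<subseteq> y" if "y \<in> layer j X" "x \<in> F" for x y
  proof
    assume "x \<subseteq> y"
    moreover have "finite y" using that(1) assms(1) finite_subset unfolding layer_def by auto
    ultimately have "card x \<le> card y" by (rule card_mono[rotated])
    then show False using that assms unfolding layer_def by auto
  qed
  then show ?thesis unfolding upper_shadow_def by auto
qed

lemma upper_shadow_self:
  assumes "finite X" "F \<subseteq> layer k X"
  shows "upper_shadow X k F = F"
proof -
  have "x = y" if "y \<in> layer k X" "x \<in> F" "x \<subseteq> y" for x y
  proof (rule card_subset_eq)
    show "finite y" using that(1) assms(1) finite_subset unfolding layer_def by auto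
    show "card x = card y" using that assms(2) unfolding layer_def by auto
  qed (fact that(3))
  then show ?thesis using assms(2) unfolding upper_shadow_def by blast
qed

lemma lower_shadow_above:
  assumes "finite X" "F \<subseteq> layer k X" "k < j"
  shows "lower_shadow j F = {}"
proof -
  have "\<not> y \<subseteq> x" if "card y = j" "x \<in> F" for x y
  proof
    assume "y \<subseteq> x"
    moreover have "finite x" using that(2) assms(1,2) finite_subset[of x X] unfolding layer_def by auto
    ultimately have "card y \<le> card x" by (rule card_mono[rotated])
    then show False using that assms unfolding layer_def by auto
  qed
  then show ?thesis unfolding lower_shadow_def by auto
qed

lemma lower_shadow_self:
  assumes "finite X" "F \<subseteq> layer k X"
  shows "lower_shadow k F = F"
proof -
  have "y = x" if "card y = k" "x \<in> F" "y \<subseteq> x" for x y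
  proof (rule card_subset_eq)
    show "finite x" using that(2) assms finite_subset[of x X] unfolding layer_def by auto
    show "card y = card x" using that assms(2) unfolding layer_def by auto
  qed (fact that(3))
  then show ?thesis using assms(2) unfolding lower_shadow_def layer_def by blast
qed

lemma min_upper_shadowsI:
  assumes "finite X" "L \<subseteq> layer k X"
    and "\<And>j L'. k < j \<Longrightarrow> L' \<subseteq> layer k X \<Longrightarrow> card L' = card L \<Longrightarrow>
           card (upper_shadow X j L) \<le> card (upper_shadow X j L')"
  shows "min_upper_shadows X k L"
  unfolding min_upper_shadows_def
proof (intro allI impI)
  fix j L' assume L': "L' \<subseteq> layer k X" "card L' = card L"
  consider "j < k" | "j = k" | "k < j" by linarith
  then show "card (upper_shadow X j L) \<le> card (upper_shadow X j L')"
  proof cases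
    case 1
    then show ?thesis using upper_shadow_below[OF assms(1,2)] by simp
  next
    case 2
    then show ?thesis using upper_shadow_self[OF assms(1)] assms(2) L' by simp
  qed (use assms(3) L' in blast)
qed

lemma min_lower_shadowsI:
  assumes "finite X" "M \<subseteq> layer k X"
    and "\<And>j M'. j < k \<Longrightarrow> M' \<subseteq> layer k X \<Longrightarrow> card M' = card M \<Longrightarrow>
           card (lower_shadow j M) \<le> card (lower_shadow j M')"
  shows "min_lower_shadows X k M"
  unfolding min_lower_shadows_def
proof (intro allI impI)
  fix j M' assume M': "M' \<subseteq> layer k X" "card M' = card M"
  consider "k < j" | "j = k" | "j < k" by linarith
  then show "card (lower_shadow j M) \<le> card (lower_shadow j M')"
  proof cases
    case 1
    then show ?thesis using lower_shadow_above[OF assms(1,2)] by simp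
  next
    case 2
    then show ?thesis using lower_shadow_self[OF assms(1)] assms(2) M' by simp
  qed (use assms(3) M' in blast)
qed

lemma min_lower_shadows_mono: "X' \<subseteq> X \<Longrightarrow> min_lower_shadows X k M \<Longrightarrow> min_lower_shadows X' k M"
  unfolding min_lower_shadows_def by (meson layer_mono subset_trans)

section \<open>Families of k-sets with minimal shadows\<close>

lemma subset_card_pred_eq_Diff_singleton:
  assumes "finite X" "y \<subseteq> X" "card y = card X - 1" "X \<noteq> {}"
  obtains b where "b \<in> X" "y = X - {b}"
proof -
  have "card X > 0" using assms(1,4) by (simp add: card_gt_0_iff)
  then have "card (X - y) = 1"
    using assms card_Diff_subset[OF finite_subset[OF assms(2,1)] assms(2)] by simp
  then obtain b where "X - y = {b}" using card_1_singletonE by blast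
  then show thesis using that assms(2) by blast
qed

lemma min_upper_shadows_common_element:
  assumes X: "finite X" "a \<in> X" and L: "L \<subseteq> layer k X" "min_upper_shadows X k L"
    and small: "card L \<le> card {x \<in> layer k X. a \<in> x}"
  shows "\<exists>i\<in>X. \<forall>x\<in>L. i \<in> x"
proof (rule ccontr)
  assume "\<not> ?thesis"
  then have miss: "\<forall>b\<in>X. \<exists>x\<in>L. b \<notin> x" by blast
  let ?j = "card X - 1"
  obtain L' where L': "L' \<subseteq> {x \<in> layer k X. a \<in> x}" "card L' = card L"
    using small by (meson obtain_subset_with_card_n)
  have "(\<lambda>b. X - {b}) ` X \<subseteq> upper_shadow X ?j L"
  proof
    fix y assume "y \<in> (\<lambda>b. X - {b}) ` X"
    then obtain b where b: "b \<in> X" "y = X - {b}" by blast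
    with miss obtain x where "x \<in> L" "b \<notin> x" by blast
    then show "y \<in> upper_shadow X ?j L"
      using b L(1) X(1) unfolding upper_shadow_def layer_def by auto
  qed
  then have "card ((\<lambda>b. X - {b}) ` X) \<le> card (upper_shadow X ?j L)"
    by (intro card_mono finite_upper_shadow X(1))
  moreover have "inj_on (\<lambda>b. X - {b}) X" by (rule inj_onI) blast
  ultimately have "card X \<le> card (upper_shadow X ?j L)"
    by (simp add: card_image)
  also have "\<dots> \<le> card (upper_shadow X ?j L')"
    using L L' unfolding min_upper_shadows_def by auto
  also have "\<dots> \<le> card ((\<lambda>b. X - {b}) ` (X - {a}))"
  proof (rule card_mono)
    show "upper_shadow X ?j L' \<subseteq> (\<lambda>b. X - {b}) ` (X - {a})"
    proof
      fix y assume "y \<in> upper_shadow X ?j L'"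
      then obtain x where y: "y \<subseteq> X" "card y = ?j" "x \<in> L'" "x \<subseteq> y"
        unfolding upper_shadow_def layer_def by auto
      then obtain b where b: "b \<in> X" "y = X - {b}"
        using subset_card_pred_eq_Diff_singleton X by blast
      have "b \<noteq> a" using y L' b by auto
      then show "y \<in> (\<lambda>b. X - {b}) ` (X - {a})" using b by blast
    qed
  qed (simp add: X(1))
  also have "\<dots> \<le> card X - 1"
    using card_image_le[of "X - {a}" "\<lambda>b. X - {b}"] X by simp
  moreover have "card X > 0" using X card_gt_0_iff by blast
  ultimately show False by linarith
qed

lemma min_lower_shadows_avoided_element:
  assumes X: "finite X" "a \<in> X" and M: "M \<subseteq> layer k X" "min_lower_shadows X k M"
    and small: "card M \<le> card (layer k (X - {a}))"
  shows "\<exists>i\<in>X. \<forall>x\<in>M. i \<notin> x"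
proof (rule ccontr)
  assume "\<not> ?thesis"
  then have hit: "\<forall>b\<in>X. \<exists>x\<in>M. b \<in> x" by blast
  obtain M' where M': "M' \<subseteq> layer k (X - {a})" "card M' = card M"
    using small by (meson obtain_subset_with_card_n)
  have "M \<subseteq> Pow X" using M(1) unfolding layer_def by blast
  moreover have "(\<lambda>b. {b}) ` X \<subseteq> lower_shadow 1 M"
    using hit unfolding lower_shadow_def by auto
  ultimately have "card ((\<lambda>b. {b}) ` X) \<le> card (lower_shadow 1 M)"
    by (rule card_mono[OF finite_lower_shadow[OF X(1)]])
  then have "card X \<le> card (lower_shadow 1 M)"
    by (simp add: card_image)
  also have "\<dots> \<le> card (lower_shadow 1 M')"
    using M M' layer_mono[of "X - {a}" X k] unfolding min_lower_shadows_def by auto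
  also have "\<dots> \<le> card ((\<lambda>b. {b}) ` (X - {a}))"
  proof (rule card_mono)
    show "lower_shadow 1 M' \<subseteq> (\<lambda>b. {b}) ` (X - {a})"
    proof
      fix y assume "y \<in> lower_shadow 1 M'"
      then obtain x b where "y = {b}" "x \<in> M'" "y \<subseteq> x"
        unfolding lower_shadow_def by (auto simp: card_1_singleton_iff)
      then show "y \<in> (\<lambda>b. {b}) ` (X - {a})" using M'(1) unfolding layer_def by blast
    qed
  qed (simp add: X(1))
  also have "\<dots> \<le> card X - 1"
    using card_image_le[of "X - {a}" "\<lambda>b. {b}"] X by simp
  moreover have "card X > 0" using X card_gt_0_iff by blast
  ultimately show False by linarith
qed

lemma min_shadows_dichotomy:
  assumes X: "finite X" "X \<noteq> {}" and L: "L \<subseteq> layer k X"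
    and up: "min_upper_shadows X k L" and low: "min_lower_shadows X k (layer k X - L)"
  shows "\<exists>i\<in>X. (\<forall>x\<in>L. i \<in> x) \<or> (\<forall>x\<in>layer k X - L. i \<notin> x)"
proof -
  obtain a where a: "a \<in> X" using X(2) by blast
  let ?S = "{x \<in> layer k X. a \<in> x}"
  have "layer k X = ?S \<union> layer k (X - {a})" "?S \<inter> layer k (X - {a}) = {}"
    unfolding layer_def by auto
  moreover have "finite ?S" "finite (layer k (X - {a}))" by (simp_all add: X(1) finite_layer)
  ultimately have card_layer: "card (layer k X) = card ?S + card (layer k (X - {a}))"
    by (metis card_Un_disjoint)
  show ?thesis
  proof (cases "card L \<le> card ?S")
    case True
    then show ?thesis using min_upper_shadows_common_element[OF X(1) a L up] by blast
  next
    case False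
    have "finite L" using L finite_layer[OF X(1)] finite_subset by blast
    then have "card (layer k X - L) = card (layer k X) - card L"
      using L card_Diff_subset by blast
    then have "card (layer k X - L) \<le> card (layer k (X - {a}))"
      using False card_layer by linarith
    then show ?thesis using min_lower_shadows_avoided_element[OF X(1) a _ low] by blast
  qed
qed

lemma upper_shadow_insert_image:
  assumes X: "finite X" "i \<notin> X" and F: "F \<subseteq> Pow X"
  shows "upper_shadow (insert i X) (Suc j) (insert i ` F) = insert i ` upper_shadow X j F"
proof (intro equalityI subsetI)
  fix y assume "y \<in> upper_shadow (insert i X) (Suc j) (insert i ` F)"
  then obtain f where y: "y \<in> layer (Suc j) (insert i X)" "f \<in> F" "insert i f \<subseteq> y"
    unfolding upper_shadow_def by blast
  then have "y \<notin> layer (Suc j) X" using X(2) unfolding layer_def by blast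
  then obtain y' where y': "y' \<in> layer j X" "y = insert i y'"
    using y(1) unfolding layer_insert[OF X] by blast
  have "i \<notin> f" using F y(2) X(2) by blast
  then have "f \<subseteq> y'" using y(3) y'(2) by blast
  then show "y \<in> insert i ` upper_shadow X j F"
    using y(2) y' unfolding upper_shadow_def by blast
next
  fix y assume "y \<in> insert i ` upper_shadow X j F"
  then obtain y' f where y': "y' \<in> layer j X" "f \<in> F" "f \<subseteq> y'" "y = insert i y'"
    unfolding upper_shadow_def by blast
  then have "y \<in> layer (Suc j) (insert i X)" unfolding layer_insert[OF X] by blast
  moreover have "insert i f \<in> insert i ` F" "insert i f \<subseteq> y" using y' by blast+
  ultimately show "y \<in> upper_shadow (insert i X) (Suc j) (insert i ` F)"
    unfolding upper_shadow_def by blast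
qed

lemma min_upper_shadows_link:
  assumes X: "finite X" "i \<notin> X" and L: "L \<subseteq> layer m X"
    and min: "min_upper_shadows (insert i X) (Suc m) (insert i ` L)"
  shows "min_upper_shadows X m L"
  unfolding min_upper_shadows_def
proof (intro allI impI)
  fix j L' assume L': "L' \<subseteq> layer m X" "card L' = card L"
  have Pow: "L \<subseteq> Pow X" "L' \<subseteq> Pow X" "\<And>F. upper_shadow X j F \<subseteq> Pow X"
    using L L'(1) unfolding upper_shadow_def layer_def by auto
  have "insert i ` L' \<subseteq> layer (Suc m) (insert i X)"
    using L'(1) layer_insert[OF X] by blast
  moreover have "card (insert i ` L') = card (insert i ` L)"
    using card_insert_image[OF Pow(1) X(2)] card_insert_image[OF Pow(2) X(2)] L'(2) by simp
  ultimately have "card (upper_shadow (insert i X) (Suc j) (insert i ` L))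
      \<le> card (upper_shadow (insert i X) (Suc j) (insert i ` L'))"
    using min unfolding min_upper_shadows_def by blast
  then show "card (upper_shadow X j L) \<le> card (upper_shadow X j L')"
    using upper_shadow_insert_image[OF X] card_insert_image[OF Pow(3) X(2)] Pow by simp
qed

lemma card_layer_Un_insert_image:
  assumes X: "finite X" "i \<notin> X" and F: "F \<subseteq> Pow X"
  shows "card (layer k X \<union> insert i ` F) = card (layer k X) + card F"
proof -
  have "layer k X \<inter> insert i ` F = {}" using X(2) unfolding layer_def by blast
  moreover have "finite (insert i ` F)" using F X(1) by (meson finite_Pow_iff finite_imageI finite_subset)
  ultimately show ?thesis
    using card_Un_disjoint[OF finite_layer[OF X(1)]] card_insert_image[OF F X(2)] by simp
qed

lemma lower_shadow_layer_Un_insert_image: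
  assumes X: "finite X" "i \<notin> X" "Suc m \<le> card X" and F: "F \<subseteq> layer m X" and j: "j \<le> m"
  shows "lower_shadow (Suc j) (layer (Suc m) X \<union> insert i ` F)
       = layer (Suc j) X \<union> insert i ` lower_shadow j F"
proof (intro equalityI subsetI)
  fix y assume "y \<in> lower_shadow (Suc j) (layer (Suc m) X \<union> insert i ` F)"
  then obtain x where y: "card y = Suc j" "y \<subseteq> x" "x \<in> layer (Suc m) X \<union> insert i ` F"
    unfolding lower_shadow_def by blast
  show "y \<in> layer (Suc j) X \<union> insert i ` lower_shadow j F"
  proof (cases "x \<in> layer (Suc m) X")
    case True
    then show ?thesis using y unfolding layer_def by auto
  next
    case False
    then obtain f where f: "f \<in> F" "x = insert i f" using y(3) by blast
    have "f \<subseteq> X" using F f(1) unfolding layer_def by blast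
    show ?thesis
    proof (cases "i \<in> y")
      case True
      have "finite y" using y(1) card_ge_0_finite[of y] by simp
      then have "y - {i} \<in> lower_shadow j F"
        using y f True unfolding lower_shadow_def by auto
      moreover have "y = insert i (y - {i})" using True by blast
      ultimately show ?thesis by blast
    next
      case False
      then show ?thesis using y f \<open>f \<subseteq> X\<close> unfolding layer_def by auto
    qed
  qed
next
  fix y assume "y \<in> layer (Suc j) X \<union> insert i ` lower_shadow j F"
  then show "y \<in> lower_shadow (Suc j) (layer (Suc m) X \<union> insert i ` F)"
  proof
    assume y: "y \<in> layer (Suc j) X"
    then obtain x where "y \<subseteq> x" "x \<subseteq> X" "card x = Suc m"
      using exists_subset_between[of y "Suc m" X] X(1,3) j unfolding layer_def by auto
    then show ?thesis using y unfolding lower_shadow_def layer_def by auto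
  next
    assume "y \<in> insert i ` lower_shadow j F"
    then obtain y' f where y: "y = insert i y'" "card y' = j" "f \<in> F" "y' \<subseteq> f"
      unfolding lower_shadow_def by blast
    have "y' \<subseteq> X" using F y(3,4) unfolding layer_def by blast
    then have "finite y'" "i \<notin> y'" using X(1,2) finite_subset by blast+
    then have "card y = Suc j" using y(1,2) by simp
    then show ?thesis using y unfolding lower_shadow_def by blast
  qed
qed

lemma min_lower_shadows_link:
  assumes X: "finite X" "i \<notin> X" "Suc m \<le> card X" and L: "L \<subseteq> layer m X"
    and min: "min_lower_shadows (insert i X) (Suc m) (layer (Suc m) (insert i X) - insert i ` L)"
  shows "min_lower_shadows X m (layer m X - L)"
proof (rule min_lower_shadowsI[OF X(1)])
  fix j M' assume j: "j < m" and M': "M' \<subseteq> layer m X" "card M' = card (layer m X - L)"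
  let ?G = "\<lambda>F. layer (Suc m) X \<union> insert i ` F"
  have layer_Pow: "layer m X \<subseteq> Pow X" unfolding layer_def by blast
  have "layer (Suc m) (insert i X) - insert i ` L
      = (layer (Suc m) X - insert i ` L) \<union> (insert i ` layer m X - insert i ` L)"
    unfolding layer_insert[OF X(1,2)] by blast
  also have "layer (Suc m) X - insert i ` L = layer (Suc m) X"
    using X(2) unfolding layer_def by blast
  also have "insert i ` layer m X - insert i ` L = insert i ` (layer m X - L)"
    using inj_on_image_set_diff[OF inj_on_insert_Pow[OF X(2)], of "layer m X" L] L layer_Pow
    by blast
  finally have compl: "layer (Suc m) (insert i X) - insert i ` L = ?G (layer m X - L)" .
  have "?G M' \<subseteq> layer (Suc m) (insert i X)"
    unfolding layer_insert[OF X(1,2)] using M'(1) by blast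
  moreover have "card (?G M') = card (?G (layer m X - L))"
  proof -
    have "M' \<subseteq> Pow X" "layer m X - L \<subseteq> Pow X" using M'(1) layer_Pow by blast+
    then show ?thesis using card_layer_Un_insert_image[OF X(1,2)] M'(2) by simp
  qed
  ultimately have "card (lower_shadow (Suc j) (?G (layer m X - L))) \<le> card (lower_shadow (Suc j) (?G M'))"
    by (rule min[unfolded compl min_lower_shadows_def, rule_format])
  moreover have "card (lower_shadow (Suc j) (?G F)) = card (layer (Suc j) X) + card (lower_shadow j F)"
    if "F \<subseteq> layer m X" for F
  proof -
    have "lower_shadow j F \<subseteq> Pow X" using lower_shadow_Pow that layer_Pow by blast
    then show ?thesis
      using lower_shadow_layer_Un_insert_image[OF X that] j card_layer_Un_insert_image[OF X(1,2)] by simp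
  qed
  ultimately show "card (lower_shadow j (layer m X - L)) \<le> card (lower_shadow j M')"
    using M'(1) by (metis Diff_subset add_le_cancel_left)
qed simp

lemma upper_shadow_star_Un:
  assumes X: "finite X" "i \<notin> X" and F: "F \<subseteq> layer k X" and k: "1 \<le> k" "k \<le> j"
  shows "upper_shadow (insert i X) j ({x \<in> layer k (insert i X). i \<in> x} \<union> F)
       = {y \<in> layer j (insert i X). i \<in> y} \<union> upper_shadow X j F"
proof (intro equalityI subsetI)
  fix y assume "y \<in> upper_shadow (insert i X) j ({x \<in> layer k (insert i X). i \<in> x} \<union> F)"
  then obtain x where y: "y \<in> layer j (insert i X)" "x \<subseteq> y"
      "x \<in> {x \<in> layer k (insert i X). i \<in> x} \<union> F"
    unfolding upper_shadow_def by blast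
  show "y \<in> {y \<in> layer j (insert i X). i \<in> y} \<union> upper_shadow X j F"
  proof (cases "i \<in> y")
    case False
    then have "x \<in> F" "y \<in> layer j X" using y unfolding layer_def by auto
    then show ?thesis using y(2) unfolding upper_shadow_def by blast
  qed (use y in blast)
next
  fix y assume "y \<in> {y \<in> layer j (insert i X). i \<in> y} \<union> upper_shadow X j F"
  then show "y \<in> upper_shadow (insert i X) j ({x \<in> layer k (insert i X). i \<in> x} \<union> F)"
  proof
    assume y: "y \<in> {y \<in> layer j (insert i X). i \<in> y}"
    then have "finite y" using X(1) finite_subset[of y "insert i X"] unfolding layer_def by auto
    then obtain x where "{i} \<subseteq> x" "x \<subseteq> y" "card x = k"
      using exists_subset_between[of "{i}" k y] k y unfolding layer_def by auto
    then show ?thesis using y unfolding upper_shadow_def layer_def by auto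
  next
    assume "y \<in> upper_shadow X j F"
    then show ?thesis using layer_mono[of X "insert i X" j] unfolding upper_shadow_def by blast
  qed
qed

lemma min_upper_shadows_delete:
  assumes X: "finite X" "i \<notin> X" and L: "L \<subseteq> layer k X" and k: "1 \<le> k"
    and min: "min_upper_shadows (insert i X) k ({x \<in> layer k (insert i X). i \<in> x} \<union> L)"
  shows "min_upper_shadows X k L"
proof (rule min_upper_shadowsI[OF X(1) L])
  fix j L' assume j: "k < j" and L': "L' \<subseteq> layer k X" "card L' = card L"
  let ?S = "\<lambda>l. {x \<in> layer l (insert i X). i \<in> x}"
  have fin: "finite (?S k)" "finite (?S j)" using X(1) finite_layer[of "insert i X"] by simp_all
  have card_S_Un: "card (?S k \<union> F) = card (?S k) + card F" if "F \<subseteq> layer k X" for F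
  proof -
    have "finite F" using that finite_layer[OF X(1)] finite_subset by blast
    moreover have "?S k \<inter> F = {}" using that X(2) unfolding layer_def by blast
    ultimately show ?thesis by (simp add: card_Un_disjoint fin(1))
  qed
  have "?S k \<union> L' \<subseteq> layer k (insert i X)" using L'(1) layer_mono[of X "insert i X" k] by blast
  moreover have "card (?S k \<union> L') = card (?S k \<union> L)" using card_S_Un L L' by simp
  ultimately have "card (upper_shadow (insert i X) j (?S k \<union> L))
      \<le> card (upper_shadow (insert i X) j (?S k \<union> L'))"
    using min unfolding min_upper_shadows_def by blast
  moreover have "card (upper_shadow (insert i X) j (?S k \<union> F)) = card (?S j) + card (upper_shadow X j F)"
    if "F \<subseteq> layer k X" for F
  proof -
    have "?S j \<inter> upper_shadow X j F = {}" using X(2) unfolding upper_shadow_def layer_def by blast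
    then show ?thesis
      using upper_shadow_star_Un[OF X that k] j card_Un_disjoint[OF fin(2) finite_upper_shadow[OF X(1)]]
      by simp
  qed
  ultimately show "card (upper_shadow X j L) \<le> card (upper_shadow X j L')"
    using L L'(1) by force
qed

lemma min_shadows_link:
  assumes X: "finite X" "i \<notin> X" "Suc m \<le> card X"
    and L: "L \<subseteq> layer (Suc m) (insert i X)" "\<forall>x\<in>L. i \<in> x"
    and up: "min_upper_shadows (insert i X) (Suc m) L"
    and low: "min_lower_shadows (insert i X) (Suc m) (layer (Suc m) (insert i X) - L)"
  obtains L' where "L = insert i ` L'" "L' \<subseteq> layer m X"
    "min_upper_shadows X m L'" "min_lower_shadows X m (layer m X - L')"
proof -
  define L' where "L' = (\<lambda>x. x - {i}) ` L"
  have "(\<lambda>x. insert i (x - {i})) ` L = (\<lambda>x. x) ` L"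
    by (rule image_cong) (use L(2) in auto)
  then have L_eq: "L = insert i ` L'" unfolding L'_def image_image by simp
  have L': "L' \<subseteq> layer m X"
  proof
    fix y assume "y \<in> L'"
    then obtain x where x: "x \<in> L" "y = x - {i}" unfolding L'_def by blast
    then have "x \<subseteq> insert i X" "card x = Suc m" "i \<in> x" using L unfolding layer_def by auto
    moreover have "finite x" using \<open>x \<subseteq> insert i X\<close> X(1) finite_subset by blast
    ultimately show "y \<in> layer m X" using x(2) unfolding layer_def by auto
  qed
  have "min_upper_shadows X m L'" using min_upper_shadows_link[OF X(1,2) L'] up L_eq by simp
  moreover have "min_lower_shadows X m (layer m X - L')"
    using min_lower_shadows_link[OF X L'] low L_eq by simp
  ultimately show thesis using that L_eq L' by blast
qed

lemma min_shadows_delete: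
  assumes X: "finite X" "i \<notin> X" "1 \<le> k"
    and L: "L \<subseteq> layer k (insert i X)" "\<forall>x\<in>layer k (insert i X) - L. i \<notin> x"
    and up: "min_upper_shadows (insert i X) k L"
    and low: "min_lower_shadows (insert i X) k (layer k (insert i X) - L)"
  obtains L' where "L = {x \<in> layer k (insert i X). i \<in> x} \<union> L'" "L' \<subseteq> layer k X"
    "min_upper_shadows X k L'" "min_lower_shadows X k (layer k X - L')"
proof -
  define L' where "L' = {x \<in> L. i \<notin> x}"
  have L_eq: "L = {x \<in> layer k (insert i X). i \<in> x} \<union> L'" using L unfolding L'_def by blast
  have L': "L' \<subseteq> layer k X" using L(1) unfolding L'_def layer_def by blast
  have compl: "layer k (insert i X) - L = layer k X - L'"
    using L X(2) unfolding L'_def layer_def by blast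
  have "min_upper_shadows X k L'" using min_upper_shadows_delete[OF X(1,2) L' X(3)] up L_eq by simp
  moreover have "min_lower_shadows X k (layer k X - L')"
    by (rule min_lower_shadows_mono[OF _ low[unfolded compl]]) blast
  ultimately show thesis using that L_eq L' by blast
qed

lemma min_shadows_reduction [consumes 5]:
  assumes X: "finite X" "Suc m < card X" and L: "L \<subseteq> layer (Suc m) X"
    and up: "min_upper_shadows X (Suc m) L"
    and low: "min_lower_shadows X (Suc m) (layer (Suc m) X - L)"
  obtains (link) i X' L' where "X = insert i X'" "i \<notin> X'" "L = insert i ` L'" "L' \<subseteq> layer m X'"
      "min_upper_shadows X' m L'" "min_lower_shadows X' m (layer m X' - L')"
    | (delete) i X' L' where "X = insert i X'" "i \<notin> X'"
      "L = {x \<in> layer (Suc m) (insert i X'). i \<in> x} \<union> L'" "L' \<subseteq> layer (Suc m) X'"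
      "min_upper_shadows X' (Suc m) L'" "min_lower_shadows X' (Suc m) (layer (Suc m) X' - L')"
proof -
  have "X \<noteq> {}" using X(2) by auto
  then obtain i where "i \<in> X" and dich: "(\<forall>x\<in>L. i \<in> x) \<or> (\<forall>x\<in>layer (Suc m) X - L. i \<notin> x)"
    using min_shadows_dichotomy[OF X(1) _ L up low] by blast
  then obtain X' where X': "X = insert i X'" "i \<notin> X'" by (meson mk_disjoint_insert)
  then have "finite X'" using X(1) by simp
  then have "Suc m \<le> card X'" using X(2) X' by simp
  note facts = L[unfolded X'(1)] up[unfolded X'(1)] low[unfolded X'(1)]
  from dich show thesis
  proof
    assume "\<forall>x\<in>L. i \<in> x"
    then obtain L' where "L = insert i ` L'" "L' \<subseteq> layer m X'"
        "min_upper_shadows X' m L'" "min_lower_shadows X' m (layer m X' - L')"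
      using min_shadows_link[OF \<open>finite X'\<close> X'(2) \<open>Suc m \<le> card X'\<close> facts(1) _ facts(2,3)] by blast
    then show thesis by (rule link[OF X'])
  next
    assume "\<forall>x\<in>layer (Suc m) X - L. i \<notin> x"
    then obtain L' where "L = {x \<in> layer (Suc m) (insert i X'). i \<in> x} \<union> L'" "L' \<subseteq> layer (Suc m) X'"
        "min_upper_shadows X' (Suc m) L'" "min_lower_shadows X' (Suc m) (layer (Suc m) X' - L')"
      using min_shadows_delete[OF \<open>finite X'\<close> X'(2) _ facts(1) _ facts(2,3)] X'(1) by auto
    then show thesis by (rule delete[OF X'])
  qed
qed

section \<open>Initial segments of the lexicographic order\<close>

lemma lex_less_Min_mem:
  assumes Y: "finite Y" "x \<subseteq> Y" "y \<subseteq> Y" and a: "Min Y \<in> x" and lt: "lex_less y x"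
  shows "Min Y \<in> y"
proof (rule ccontr)
  assume "Min Y \<notin> y"
  then have "Min Y \<in> symdiff y x" using a unfolding symdiff_def by blast
  moreover have sub: "symdiff y x \<subseteq> Y" using Y unfolding symdiff_def by blast
  ultimately have "Min (symdiff y x) = Min Y"
  proof (intro Min_eqI)
    show "finite (symdiff y x)" using sub Y(1) finite_subset by blast
    show "Min Y \<le> z" if "z \<in> symdiff y x" for z using that sub Y(1) Min_le by blast
  qed
  then show False using lt \<open>Min Y \<notin> y\<close> unfolding lex_less_def by simp
qed

lemma lex_less_insert_iff:
  assumes "finite x" "finite y" "a \<notin> x" "a \<notin> y"
  shows "lex_less (insert a y) (insert a x) \<longleftrightarrow> lex_less y x"
proof (cases "y = x")
  case False
  have eq: "symdiff (insert a y) (insert a x) = symdiff y x"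
    using assms(3,4) unfolding symdiff_def by blast
  have "symdiff y x \<noteq> {}" "finite (symdiff y x)"
    using False assms(1,2) unfolding symdiff_def by auto
  then have "Min (symdiff y x) \<in> symdiff y x" by (rule Min_in[rotated])
  then have "Min (symdiff y x) \<noteq> a" using assms(3,4) unfolding symdiff_def by blast
  moreover have "insert a y \<noteq> insert a x" using False assms(3,4) by (metis insert_ident)
  ultimately show ?thesis using False eq unfolding lex_less_def by simp
qed (simp add: lex_less_def)

lemma lex_initial_subsingleton: "F \<subseteq> layer k Y \<Longrightarrow> layer k Y \<subseteq> {z} \<Longrightarrow> lex_initial Y k F"
  unfolding lex_initial_def lex_less_def by blast

lemma lex_initial_insert_Min:
  assumes Y: "finite Y" "Y \<noteq> {}" and F: "lex_initial (Y - {Min Y}) m F"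
  shows "lex_initial Y (Suc m) (insert (Min Y) ` F)"
proof -
  let ?a = "Min Y"
  have layer_Y: "layer (Suc m) Y = layer (Suc m) (Y - {?a}) \<union> insert ?a ` layer m (Y - {?a})"
    using layer_insert[of "Y - {?a}" ?a m] Y by (simp add: insert_absorb)
  have F_layer: "F \<subseteq> layer m (Y - {?a})" using F unfolding lex_initial_def by blast
  have "y \<in> insert ?a ` F"
    if f: "f \<in> F" and y: "y \<in> layer (Suc m) Y" and lt: "lex_less y (insert ?a f)" for f y
  proof -
    have f_sub: "f \<subseteq> Y - {?a}" using F_layer f unfolding layer_def by blast
    then have "insert ?a f \<subseteq> Y" using Min_in[OF Y] by blast
    moreover have "y \<subseteq> Y" using y unfolding layer_def by blast
    ultimately have "?a \<in> y" using lex_less_Min_mem[OF Y(1) _ _ _ lt] by blast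
    then have "y \<notin> layer (Suc m) (Y - {?a})" unfolding layer_def by blast
    then obtain y' where y': "y' \<in> layer m (Y - {?a})" "y = insert ?a y'"
      using y unfolding layer_Y by blast
    have "finite f" "finite y'" "?a \<notin> f" "?a \<notin> y'"
      using Y(1) f_sub y'(1) finite_subset unfolding layer_def by auto
    then have "lex_less y' f" using lt y'(2) lex_less_insert_iff by simp
    then have "y' \<in> F" using F f y'(1) unfolding lex_initial_def by blast
    then show ?thesis using y'(2) by blast
  qed
  moreover have "insert ?a ` F \<subseteq> layer (Suc m) Y" using F_layer unfolding layer_Y by blast
  ultimately show ?thesis unfolding lex_initial_def by blast
qed

lemma lex_initial_star_Un:
  assumes Y: "finite Y" "Y \<noteq> {}" and F: "lex_initial (Y - {Min Y}) k F"
  shows "lex_initial Y k ({x \<in> layer k Y. Min Y \<in> x} \<union> F)"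
proof -
  let ?a = "Min Y"
  have F_layer: "F \<subseteq> layer k (Y - {?a})" using F unfolding lex_initial_def by blast
  then have F_sub: "F \<subseteq> layer k Y" using layer_mono[of "Y - {?a}" Y k] by blast
  have "?a \<in> y"
    if x: "x \<in> {x \<in> layer k Y. ?a \<in> x} \<union> F" and y: "y \<in> layer k Y" "y \<notin> F" and lt: "lex_less y x"
    for x y
  proof (cases "x \<in> F")
    case True
    show ?thesis
    proof (rule ccontr)
      assume "?a \<notin> y"
      then have "y \<in> layer k (Y - {?a})" using y(1) unfolding layer_def by blast
      then have "y \<in> F" using F True lt unfolding lex_initial_def by blast
      then show False using y(2) by blast
    qed
  next
    case False
    then have "x \<subseteq> Y" "?a \<in> x" using x unfolding layer_def by blast+
    moreover have "y \<subseteq> Y" using y(1) unfolding layer_def by blast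
    ultimately show ?thesis using lex_less_Min_mem[OF Y(1) _ _ _ lt] by blast
  qed
  then show ?thesis using F_sub unfolding lex_initial_def by blast
qed

lemma bij_betw_fun_upd_insert:
  assumes "bij_betw s X Y" "i \<notin> X" "a \<notin> Y"
  shows "bij_betw (s(i := a)) (insert i X) (insert a Y)"
proof -
  have "bij_betw (s(i := a)) X Y = bij_betw s X Y"
    using assms(2) by (intro bij_betw_cong) auto
  then have "bij_betw (s(i := a)) X Y" using assms(1) by simp
  then have "bij_betw (s(i := a)) (X \<union> {i}) (Y \<union> {(s(i := a)) i})"
    using assms(2,3) by (intro notIn_Un_bij_betw) auto
  then show ?thesis by simp
qed

lemma image_fun_upd_notin: "i \<notin> x \<Longrightarrow> (s(i := a)) ` x = s ` x"
  by (rule image_cong) auto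

lemma exists_lex_bij_insert_image:
  assumes s: "bij_betw s X (Y - {Min Y})" and i: "i \<notin> X" and Y: "finite Y" "Y \<noteq> {}"
    and L: "L \<subseteq> Pow X" and lex: "lex_initial (Y - {Min Y}) m (image s ` L)"
  shows "\<exists>s'. bij_betw s' (insert i X) Y \<and> lex_initial Y (Suc m) (image s' ` insert i ` L)"
proof (intro exI conjI)
  let ?s = "s(i := Min Y)"
  have "insert (Min Y) (Y - {Min Y}) = Y" using Min_in[OF Y] by blast
  then show "bij_betw ?s (insert i X) Y"
    using bij_betw_fun_upd_insert[OF s i, of "Min Y"] by simp
  have "?s ` insert i x = insert (Min Y) (s ` x)" if "x \<in> L" for x
  proof -
    have "i \<notin> x" using that L i by blast
    then show ?thesis by (simp only: image_insert image_fun_upd_notin[OF \<open>i \<notin> x\<close>] fun_upd_same)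
  qed
  then have "image ?s ` insert i ` L = insert (Min Y) ` image s ` L"
    unfolding image_image by (rule image_cong[OF refl])
  then show "lex_initial Y (Suc m) (image ?s ` insert i ` L)"
    using lex_initial_insert_Min[OF Y lex] by simp
qed

lemma exists_lex_bij_star_Un:
  assumes s: "bij_betw s X (Y - {Min Y})" and i: "i \<notin> X" and Y: "finite Y" "Y \<noteq> {}"
    and L: "L \<subseteq> Pow X" and lex: "lex_initial (Y - {Min Y}) k (image s ` L)"
  shows "\<exists>s'. bij_betw s' (insert i X) Y \<and>
    lex_initial Y k (image s' ` ({x \<in> layer k (insert i X). i \<in> x} \<union> L))"
proof (intro exI conjI)
  let ?s = "s(i := Min Y)"
  have "insert (Min Y) (Y - {Min Y}) = Y" using Min_in[OF Y] by blast
  then show bij: "bij_betw ?s (insert i X) Y"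
    using bij_betw_fun_upd_insert[OF s i, of "Min Y"] by simp
  have "?s ` x = s ` x" if "x \<in> L" for x
  proof (rule image_fun_upd_notin)
    show "i \<notin> x" using that L i by blast
  qed
  then have "image ?s ` L = image s ` L" by (rule image_cong[OF refl])
  moreover have "image ?s ` {x \<in> layer k (insert i X). i \<in> x} = {y \<in> layer k Y. Min Y \<in> y}"
    using image_layer_star[OF bij, of i k] by simp
  ultimately show "lex_initial Y k (image ?s ` ({x \<in> layer k (insert i X). i \<in> x} \<union> L))"
    using lex_initial_star_Un[OF Y lex] by (simp add: image_Un)
qed

lemma exists_lex_bij_degenerate:
  assumes X: "finite X" "finite Y" "card Y = card X"
    and L: "L \<subseteq> layer k X" "L = {} \<or> k = 0 \<or> card X \<le> k"
  shows "\<exists>s. bij_betw s X Y \<and> lex_initial Y k (image s ` L)"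
proof -
  obtain s where s: "bij_betw s X Y" using finite_same_card_bij X by metis
  have sub: "image s ` L \<subseteq> layer k Y" using image_layer[OF s] L(1) by blast
  have "lex_initial Y k (image s ` L)"
  proof (cases "L = {}")
    case False
    then have "layer k Y \<subseteq> {{}} \<or> layer k Y \<subseteq> {Y}"
      using L(2) layer_0_subset[OF X(2)] layer_subset_singleton[OF X(2)] X(3) by auto
    then show ?thesis using lex_initial_subsingleton[OF sub] by blast
  qed (simp add: lex_initial_def)
  then show ?thesis using s by blast
qed

theorem min_shadows_imp_lex_initial:
  fixes X :: "'a set" and Y :: "nat set"
  assumes "finite X" "finite Y" "card Y = card X" "L \<subseteq> layer k X"
    and "min_upper_shadows X k L" "min_lower_shadows X k (layer k X - L)"
  shows "\<exists>s. bij_betw s X Y \<and> lex_initial Y k (image s ` L)"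
  using assms
proof (induction "card X" arbitrary: X Y k L rule: less_induct)
  case less
  note X = less.prems(1) and Y = less.prems(2,3) and L = less.prems(4-6)
  show ?case
  proof (cases "L = {} \<or> k = 0 \<or> card X \<le> k")
    case True
    then show ?thesis using exists_lex_bij_degenerate X Y L(1) by blast
  next
    case False
    then obtain m where k: "k = Suc m" using not0_implies_Suc by blast
    then have "Suc m < card X" using False by simp
    have "Y \<noteq> {}" using Y False by auto
    have IH: "\<exists>s. bij_betw s X' (Y - {Min Y}) \<and> lex_initial (Y - {Min Y}) l (image s ` L')"
      if "X = insert i X'" "i \<notin> X'" "L' \<subseteq> layer l X'" "min_upper_shadows X' l L'"
        "min_lower_shadows X' l (layer l X' - L')" for i X' l L'
    proof (rule less.hyps)
      show "finite X'" using X that(1) by simp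
      then show "card X' < card X" "card (Y - {Min Y}) = card X'"
        using Y that(1,2) Min_in[OF Y(1) \<open>Y \<noteq> {}\<close>] by simp_all
    qed (use Y(1) that(3-5) in simp_all)
    show ?thesis using X \<open>Suc m < card X\<close> L[unfolded k]
    proof (cases rule: min_shadows_reduction)
      case (link i X' L')
      then obtain s where "bij_betw s X' (Y - {Min Y})" "lex_initial (Y - {Min Y}) m (image s ` L')"
        using IH by blast
      moreover have "L' \<subseteq> Pow X'" using link(4) unfolding layer_def by blast
      ultimately show ?thesis
        using exists_lex_bij_insert_image[OF _ link(2) Y(1) \<open>Y \<noteq> {}\<close>] link(1,3) k(1) by simp
    next
      case (delete i X' L')
      then obtain s where "bij_betw s X' (Y - {Min Y})" "lex_initial (Y - {Min Y}) k (image s ` L')"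
        using IH k(1) by blast
      moreover have "L' \<subseteq> Pow X'" using delete(4) unfolding layer_def by blast
      ultimately show ?thesis
        using exists_lex_bij_star_Un[OF _ delete(2) Y(1) \<open>Y \<noteq> {}\<close>] delete(1,3) k(1) by simp
    qed
  qed
qed

section \<open>Sets between two layers of the cube\<close>

definition cube_below :: "nat \<Rightarrow> nat \<Rightarrow> nat set set" where
  "cube_below n k = {y \<in> cube n. card y < k}"

definition cube_above :: "nat \<Rightarrow> nat \<Rightarrow> nat set set" where
  "cube_above n k = {y \<in> cube n. k < card y}"

lemma finite_cube: "finite (cube n)"
  unfolding cube_def by simp

lemma finite_mem_cube: "x \<in> cube n \<Longrightarrow> finite x"
  unfolding cube_def using finite_subset by blast

lemma layer_atLeastAtMost: "layer k {1..n} = {y \<in> cube n. card y = k}"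
  unfolding layer_def cube_def by blast

lemma finite_cube_below: "finite (cube_below n k)"
  unfolding cube_below_def using finite_cube by simp

lemma finite_cube_above: "finite (cube_above n k)"
  unfolding cube_above_def using finite_cube by simp

lemma hdist_commute: "hdist x y = hdist y x"
  unfolding hdist_def symdiff_def by (simp add: Un_commute)

lemma hdist_eq_card_Diff: "finite x \<Longrightarrow> finite y \<Longrightarrow> hdist x y = card (x - y) + card (y - x)"
  unfolding hdist_def symdiff_def by (subst card_Un_disjoint) auto

lemma card_add_card_Diff_swap:
  "finite x \<Longrightarrow> finite y \<Longrightarrow> card x + card (y - x) = card y + card (x - y)"
  using card_Int_Diff[of x y] card_Int_Diff[of y x] by (simp add: Int_commute)

lemma card_le_card_add_hdist: "finite x \<Longrightarrow> finite y \<Longrightarrow> card y \<le> card x + hdist x y"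
  using card_add_card_Diff_swap[of x y] hdist_eq_card_Diff[of x y] by linarith

lemma subset_if_hdist_add_card_le:
  assumes "finite x" "finite y" "hdist x y + card x \<le> card y"
  shows "x \<subseteq> y"
proof -
  have "card (x - y) = 0"
    using assms card_add_card_Diff_swap[of x y] hdist_eq_card_Diff[of x y] by linarith
  then show ?thesis using assms(1) by simp
qed

lemma hdist_subset: "x \<subseteq> y \<Longrightarrow> finite y \<Longrightarrow> hdist x y = card y - card x"
  using hdist_eq_card_Diff[of x y] card_Diff_subset[of x y] finite_subset[of x y] by simp

lemma nbhd_cube_below_Un:
  assumes k: "1 \<le> k" and L: "L \<subseteq> layer k {1..n}"
  shows "nbhd n s (cube_below n k \<union> L) = cube_below n (k + s) \<union> upper_shadow {1..n} (k + s) L"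
proof (intro equalityI subsetI)
  fix y assume "y \<in> nbhd n s (cube_below n k \<union> L)"
  then obtain x where y: "y \<in> cube n" and x: "x \<in> cube_below n k \<union> L" and d: "hdist x y \<le> s"
    unfolding nbhd_def by (auto simp: hdist_commute)
  have "x \<in> cube n" using x L unfolding cube_below_def layer_atLeastAtMost by blast
  then have fin: "finite x" "finite y" using y finite_mem_cube by blast+
  show "y \<in> cube_below n (k + s) \<union> upper_shadow {1..n} (k + s) L"
  proof (cases "card y < k + s")
    case False
    moreover have "card y \<le> card x + s" using card_le_card_add_hdist[OF fin] d by linarith
    ultimately have "x \<in> L" "card x = k" "card y = k + s"
      using x L unfolding cube_below_def layer_atLeastAtMost by auto
    moreover have "x \<subseteq> y" using subset_if_hdist_add_card_le[OF fin] d calculation by simp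
    ultimately show ?thesis using y unfolding upper_shadow_def layer_atLeastAtMost by blast
  qed (use y in \<open>simp add: cube_below_def\<close>)
next
  fix y assume y: "y \<in> cube_below n (k + s) \<union> upper_shadow {1..n} (k + s) L"
  then have y_cube: "y \<in> cube n" unfolding cube_below_def upper_shadow_def layer_atLeastAtMost by blast
  then have fy: "finite y" by (rule finite_mem_cube)
  from y consider (below) "card y < k + s" | (shadow) x where "x \<in> L" "x \<subseteq> y" "card y = k + s"
    unfolding cube_below_def upper_shadow_def layer_atLeastAtMost by blast
  then show "y \<in> nbhd n s (cube_below n k \<union> L)"
  proof cases
    case below
    obtain x where x: "x \<subseteq> y" "card x = min (card y) (k - 1)"
      using obtain_subset_with_card_n[of "min (card y) (k - 1)" y] by auto
    then have "x \<in> cube_below n k" using y_cube k unfolding cube_below_def cube_def by auto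
    moreover have "hdist y x \<le> s"
      using hdist_subset[OF x(1) fy] x(2) below hdist_commute[of y x] k by (auto simp: min_def)
    ultimately show ?thesis using y_cube unfolding nbhd_def by blast
  next
    case shadow
    have "card x = k" using shadow(1) L unfolding layer_def by blast
    then have "hdist y x \<le> s" using hdist_subset[OF shadow(2) fy] shadow(3) hdist_commute[of y x] by simp
    then show ?thesis using y_cube shadow(1) unfolding nbhd_def by blast
  qed
qed

lemma nbhd_cube_above_Un:
  assumes k: "k < n" "j \<le> k" and M: "M \<subseteq> layer k {1..n}"
  shows "nbhd n (k - j) (cube_above n k \<union> M) = cube_above n j \<union> lower_shadow j M"
proof (intro equalityI subsetI)
  fix y assume "y \<in> nbhd n (k - j) (cube_above n k \<union> M)"
  then obtain x where y: "y \<in> cube n" and x: "x \<in> cube_above n k \<union> M" and d: "hdist y x \<le> k - j"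
    unfolding nbhd_def by blast
  have "x \<in> cube n" using x M unfolding cube_above_def layer_atLeastAtMost by blast
  then have fin: "finite x" "finite y" using y finite_mem_cube by blast+
  show "y \<in> cube_above n j \<union> lower_shadow j M"
  proof (cases "j < card y")
    case False
    moreover have "card x \<le> card y + (k - j)" using card_le_card_add_hdist[of y x] fin d by linarith
    ultimately have "x \<in> M" "card x = k" "card y = j"
      using x M k(2) unfolding cube_above_def layer_atLeastAtMost by auto
    moreover have "y \<subseteq> x" using subset_if_hdist_add_card_le[of y x] fin d k(2) calculation by simp
    ultimately show ?thesis unfolding lower_shadow_def by blast
  qed (use y in \<open>simp add: cube_above_def\<close>)
next
  fix y assume y: "y \<in> cube_above n j \<union> lower_shadow j M"
  then have y_cube: "y \<in> cube n"
    using M unfolding cube_above_def lower_shadow_def layer_def cube_def by blast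
  then have fy: "finite y" and y_sub: "y \<subseteq> {1..n}" using finite_mem_cube unfolding cube_def by blast+
  from y consider (above) "j < card y" | (shadow) x where "x \<in> M" "y \<subseteq> x" "card y = j"
    unfolding cube_above_def lower_shadow_def by blast
  then show "y \<in> nbhd n (k - j) (cube_above n k \<union> M)"
  proof cases
    case above
    have "card y \<le> n" using card_mono[OF _ y_sub] by simp
    then obtain x where x: "y \<subseteq> x" "x \<subseteq> {1..n}" "card x = max (card y) (Suc k)"
      using exists_subset_between[of y "max (card y) (Suc k)" "{1..n}"] y_sub k(1) by auto
    then have "x \<in> cube_above n k" unfolding cube_above_def cube_def by auto
    moreover have "finite x" using x(2) finite_subset by blast
    then have "hdist y x \<le> k - j" using hdist_subset[OF x(1)] x(3) above k(2) by (auto simp: max_def)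
    ultimately show ?thesis using y_cube unfolding nbhd_def by blast
  next
    case shadow
    have "card x = k" "finite x" using shadow(1) M finite_subset unfolding layer_def by blast+
    then have "hdist y x \<le> k - j" using hdist_subset[OF shadow(2)] shadow(3) by simp
    then show ?thesis using y_cube shadow(1) unfolding nbhd_def by blast
  qed
qed

lemma min_upper_shadows_if_nbhd_minimal:
  assumes k: "1 \<le> k" and L: "L \<subseteq> layer k {1..n}"
    and min: "\<And>s. 0 < s \<Longrightarrow> nbhd_minimal n s (cube_below n k \<union> L)"
  shows "min_upper_shadows {1..n} k L"
proof (rule min_upper_shadowsI[OF finite_atLeastAtMost L])
  fix j L' assume j: "k < j" and L': "L' \<subseteq> layer k {1..n}" "card L' = card L"
  have card_Un: "card (cube_below n k \<union> F) = card (cube_below n k) + card F"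
    if "F \<subseteq> layer k {1..n}" for F
  proof -
    have "finite F" using that finite_layer[of "{1..n}" k] finite_subset by blast
    moreover have "cube_below n k \<inter> F = {}"
      using that unfolding cube_below_def layer_atLeastAtMost by auto
    ultimately show ?thesis using card_Un_disjoint[OF finite_cube_below] by blast
  qed
  have card_nbhd: "card (nbhd n (j - k) (cube_below n k \<union> F))
      = card (cube_below n j) + card (upper_shadow {1..n} j F)" if "F \<subseteq> layer k {1..n}" for F
  proof -
    have "cube_below n j \<inter> upper_shadow {1..n} j F = {}"
      unfolding cube_below_def upper_shadow_def layer_atLeastAtMost by auto
    then show ?thesis
      using nbhd_cube_below_Un[OF k that, of "j - k"] j
        card_Un_disjoint[OF finite_cube_below finite_upper_shadow[OF finite_atLeastAtMost]]
      by simp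
  qed
  have "nbhd_minimal n (j - k) (cube_below n k \<union> L)" using min j by simp
  moreover have "cube_below n k \<union> L' \<subseteq> cube n"
    using L'(1) unfolding cube_below_def layer_atLeastAtMost by blast
  moreover have "card (cube_below n k \<union> L') = card (cube_below n k \<union> L)"
    using card_Un L L' by simp
  ultimately have "card (nbhd n (j - k) (cube_below n k \<union> L)) \<le> card (nbhd n (j - k) (cube_below n k \<union> L'))"
    unfolding nbhd_minimal_def by blast
  then show "card (upper_shadow {1..n} j L) \<le> card (upper_shadow {1..n} j L')"
    using card_nbhd[OF L] card_nbhd[OF L'(1)] by simp
qed

lemma min_lower_shadows_if_nbhd_minimal:
  assumes k: "k \<le> n" and M: "M \<subseteq> layer k {1..n}"
    and min: "\<And>s. 0 < s \<Longrightarrow> nbhd_minimal n s (cube_above n k \<union> M)"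
  shows "min_lower_shadows {1..n} k M"
proof (rule min_lower_shadowsI[OF finite_atLeastAtMost M])
  fix j M' assume j: "j < k" and M': "M' \<subseteq> layer k {1..n}" "card M' = card M"
  show "card (lower_shadow j M) \<le> card (lower_shadow j M')"
  proof (cases "k = n")
    case True
    then have "layer k {1..n} \<subseteq> {{1..n}}" using layer_subset_singleton[of "{1..n}" k] by simp
    then have "M' = M" using M M' by (auto simp: subset_singleton_iff)
    then show ?thesis by simp
  next
    case False
    then have k_less: "k < n" using k by simp
    have card_Un: "card (cube_above n k \<union> F) = card (cube_above n k) + card F"
      if "F \<subseteq> layer k {1..n}" for F
    proof -
      have "finite F" using that finite_layer[of "{1..n}" k] finite_subset by blast
      moreover have "cube_above n k \<inter> F = {}"
        using that unfolding cube_above_def layer_atLeastAtMost by auto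
      ultimately show ?thesis using card_Un_disjoint[OF finite_cube_above] by blast
    qed
    have card_nbhd: "card (nbhd n (k - j) (cube_above n k \<union> F))
        = card (cube_above n j) + card (lower_shadow j F)" if "F \<subseteq> layer k {1..n}" for F
    proof -
      have "cube_above n j \<inter> lower_shadow j F = {}"
        unfolding cube_above_def lower_shadow_def by auto
      moreover have "F \<subseteq> Pow {1..n}" using that unfolding layer_def by blast
      ultimately show ?thesis
        using nbhd_cube_above_Un[OF k_less _ that, of j] j
          card_Un_disjoint[OF finite_cube_above finite_lower_shadow[OF finite_atLeastAtMost]]
        by simp
    qed
    have "nbhd_minimal n (k - j) (cube_above n k \<union> M)" using min j by simp
    moreover have "cube_above n k \<union> M' \<subseteq> cube n"
      using M'(1) unfolding cube_above_def layer_atLeastAtMost by blast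
    moreover have "card (cube_above n k \<union> M') = card (cube_above n k \<union> M)"
      using card_Un M M' by simp
    ultimately have "card (nbhd n (k - j) (cube_above n k \<union> M)) \<le> card (nbhd n (k - j) (cube_above n k \<union> M'))"
      unfolding nbhd_minimal_def by blast
    then show ?thesis using card_nbhd[OF M] card_nbhd[OF M'(1)] by simp
  qed
qed

lemma sim_initial_segment_cube_below_Un:
  assumes F: "lex_initial {1..n} k F"
  shows "sim_initial_segment n (cube_below n k \<union> F)"
  unfolding sim_initial_segment_def
proof (intro conjI ballI impI)
  have "F \<subseteq> layer k {1..n}" using F unfolding lex_initial_def by blast
  then show "cube_below n k \<union> F \<subseteq> cube n" unfolding cube_below_def layer_atLeastAtMost by blast
  fix x y assume x: "x \<in> cube_below n k \<union> F" and y: "y \<in> cube n" and lt: "sim_less y x"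
  show "y \<in> cube_below n k \<union> F"
  proof (cases "card y < k")
    case False
    have "card x \<le> k" using x \<open>F \<subseteq> layer k {1..n}\<close> unfolding cube_below_def layer_def by auto
    then have "x \<in> F" "card y = k" "lex_less y x"
      using x False lt unfolding cube_below_def sim_less_def by auto
    moreover have "y \<in> layer k {1..n}" using y \<open>card y = k\<close> unfolding layer_atLeastAtMost by blast
    ultimately show ?thesis using F unfolding lex_initial_def by blast
  qed (use y in \<open>simp add: cube_below_def\<close>)
qed

lemma sim_initial_segment_subset_empty:
  assumes "S \<subseteq> {{}}"
  shows "sim_initial_segment n S"
  unfolding sim_initial_segment_def
proof (intro conjI ballI impI)
  show "S \<subseteq> cube n" using assms unfolding cube_def by blast
  fix x y assume "x \<in> S" "y \<in> cube n" "sim_less y x"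
  then have "x = {}" "finite y" using assms finite_mem_cube by blast+
  then show "y \<in> S" using \<open>sim_less y x\<close> unfolding sim_less_def lex_less_def by auto
qed

lemma sim_initial_segment_cube: "sim_initial_segment n (cube n)"
  unfolding sim_initial_segment_def by blast

lemma image_cube_below_permutes:
  assumes "p permutes {1..n}"
  shows "image p ` cube_below n k = cube_below n k"
proof -
  have "cube_below n k = (\<Union>j<k. layer j {1..n})"
    unfolding cube_below_def layer_atLeastAtMost by auto
  then show ?thesis using image_layer[OF permutes_imp_bij[OF assms]] by (simp add: image_UN)
qed

lemma extremal_between_middle_layers:
  assumes ext: "extremal n A" and k: "1 \<le> k" "k \<le> n"
    and A: "cube_below n k \<subseteq> A" "A \<subseteq> cube_below n (Suc k)"
  shows "\<exists>p. p permutes {1..n} \<and> sim_initial_segment n (image p ` A)"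
proof -
  define L where "L = {y \<in> A. card y = k}"
  have L: "L \<subseteq> layer k {1..n}" using A(2) unfolding L_def cube_below_def layer_atLeastAtMost by blast
  have A_eq: "A = cube_below n k \<union> L" using A unfolding L_def cube_below_def by auto
  have compl: "cube n - A = cube_above n k \<union> (layer k {1..n} - L)"
    using A unfolding L_def cube_below_def cube_above_def layer_atLeastAtMost by auto
  have "min_upper_shadows {1..n} k L"
    using min_upper_shadows_if_nbhd_minimal[OF k(1) L] ext A_eq unfolding extremal_def by simp
  moreover have "min_lower_shadows {1..n} k (layer k {1..n} - L)"
    using min_lower_shadows_if_nbhd_minimal[OF k(2) Diff_subset] ext compl unfolding extremal_def by simp
  ultimately obtain s where s: "bij_betw s {1..n} {1..n}" "lex_initial {1..n} k (image s ` L)"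
    using min_shadows_imp_lex_initial[OF finite_atLeastAtMost finite_atLeastAtMost refl L] by blast
  define p where "p x = (if x \<in> {1..n} then s x else x)" for x
  have "bij_betw p {1..n} {1..n} = bij_betw s {1..n} {1..n}"
    unfolding p_def by (rule bij_betw_cong) simp
  then have "bij_betw p {1..n} {1..n}" using s(1) by simp
  moreover have "p x = x" if "x \<notin> {1..n}" for x using that unfolding p_def by auto
  ultimately have p: "p permutes {1..n}" by (rule bij_imp_permutes)
  have "image p ` L = image s ` L"
  proof (rule image_cong[OF refl])
    fix x assume "x \<in> L"
    then have "x \<subseteq> {1..n}" using L unfolding layer_def by blast
    then show "p ` x = s ` x" unfolding p_def by (intro image_cong) auto
  qed
  then have "image p ` A = cube_below n k \<union> image s ` L"
    using A_eq image_cube_below_permutes[OF p] by (simp add: image_Un)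
  then show ?thesis using p sim_initial_segment_cube_below_Un[OF s(2)] by auto
qed

lemma extremal_between_layers:
  assumes ext: "extremal n A" and A: "cube_below n k \<subseteq> A" "A \<subseteq> cube_below n (Suc k)"
  shows "\<exists>p. p permutes {1..n} \<and> sim_initial_segment n (image p ` A)"
proof -
  consider "k = 0" | "n < k" | "1 \<le> k" "k \<le> n" by linarith
  then show ?thesis
  proof cases
    case 1
    then have "A \<subseteq> {{}}" using A(2) finite_mem_cube unfolding cube_below_def by fastforce
    then show ?thesis using sim_initial_segment_subset_empty by (intro exI[of _ id]) simp
  next
    case 2
    have "card y < k" if "y \<in> cube n" for y
      using 2 card_mono[of "{1..n}" y] that unfolding cube_def by simp
    then have "A = cube n" using A(1) ext unfolding extremal_def cube_below_def by blast
    then show ?thesis using sim_initial_segment_cube by (intro exI[of _ id]) simp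
  qed (use extremal_between_middle_layers[OF ext _ _ A] in blast)
qed

section \<open>Translations of the cube\<close>

lemma symdiff_symdiff_cancel [simp]: "symdiff (symdiff x t) t = x"
  unfolding symdiff_def by blast

lemma symdiff_mem_cube: "t \<in> cube n \<Longrightarrow> x \<in> cube n \<Longrightarrow> symdiff x t \<in> cube n"
  unfolding symdiff_def cube_def by blast

lemma hdist_symdiff_symdiff: "hdist (symdiff x t) (symdiff y t) = hdist x y"
proof -
  have "symdiff (symdiff x t) (symdiff y t) = symdiff x y" unfolding symdiff_def by blast
  then show ?thesis unfolding hdist_def by simp
qed

lemma inj_symdiff: "inj (\<lambda>x. symdiff x t)"
  by (rule inj_on_inverseI[where g = "\<lambda>x. symdiff x t"]) simp

lemma image_symdiff_cube:
  assumes "t \<in> cube n"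
  shows "(\<lambda>x. symdiff x t) ` cube n = cube n"
proof (intro equalityI subsetI)
  fix y assume "y \<in> cube n"
  then have "symdiff y t \<in> cube n" using symdiff_mem_cube[OF assms] by blast
  then show "y \<in> (\<lambda>x. symdiff x t) ` cube n" by (rule rev_image_eqI) simp
qed (use symdiff_mem_cube[OF assms] in blast)

lemma nbhd_image_symdiff:
  assumes "t \<in> cube n"
  shows "nbhd n s ((\<lambda>x. symdiff x t) ` B) = (\<lambda>x. symdiff x t) ` nbhd n s B"
proof (intro equalityI subsetI)
  fix y assume "y \<in> nbhd n s ((\<lambda>x. symdiff x t) ` B)"
  then obtain x where y: "y \<in> cube n" "x \<in> B" "hdist y (symdiff x t) \<le> s"
    unfolding nbhd_def by blast
  then have "hdist (symdiff y t) x \<le> s" using hdist_symdiff_symdiff[of y t "symdiff x t"] by simp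
  then have "symdiff y t \<in> nbhd n s B" using y symdiff_mem_cube[OF assms] unfolding nbhd_def by blast
  then show "y \<in> (\<lambda>x. symdiff x t) ` nbhd n s B" by (rule rev_image_eqI) simp
next
  fix y assume "y \<in> (\<lambda>x. symdiff x t) ` nbhd n s B"
  then obtain z x where y: "y = symdiff z t" "z \<in> cube n" "x \<in> B" "hdist z x \<le> s"
    unfolding nbhd_def by blast
  then have "hdist y (symdiff x t) \<le> s" using hdist_symdiff_symdiff by simp
  then show "y \<in> nbhd n s ((\<lambda>x. symdiff x t) ` B)"
    using y symdiff_mem_cube[OF assms] unfolding nbhd_def by blast
qed

lemma nbhd_minimal_image_symdiff:
  assumes t: "t \<in> cube n" and min: "nbhd_minimal n s B"
  shows "nbhd_minimal n s ((\<lambda>x. symdiff x t) ` B)"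
  unfolding nbhd_minimal_def
proof (intro allI impI)
  let ?f = "\<lambda>x. symdiff x t"
  fix C assume C: "C \<subseteq> cube n" "card C = card (?f ` B)"
  have card_image: "card (?f ` D) = card D" for D
    using inj_symdiff[of t] by (simp add: card_image inj_on_subset)
  have "?f ` C \<subseteq> cube n" using C(1) symdiff_mem_cube[OF t] by blast
  moreover have "card (?f ` C) = card B" using C(2) card_image by simp
  ultimately have "card (nbhd n s B) \<le> card (nbhd n s (?f ` C))"
    using min unfolding nbhd_minimal_def by blast
  then show "card (nbhd n s (?f ` B)) \<le> card (nbhd n s C)"
    using nbhd_image_symdiff[OF t, of s B] nbhd_image_symdiff[OF t, of s "?f ` C"] card_image
    by (simp add: image_image)
qed

lemma extremal_image_symdiff:
  assumes ext: "extremal n A" and t: "t \<in> cube n"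
  shows "extremal n ((\<lambda>x. symdiff x t) ` A)"
proof -
  have "(\<lambda>x. symdiff x t) ` A \<subseteq> cube n"
    using ext symdiff_mem_cube[OF t] unfolding extremal_def by blast
  moreover have "cube n - (\<lambda>x. symdiff x t) ` A = (\<lambda>x. symdiff x t) ` (cube n - A)"
    using image_set_diff[OF inj_symdiff[of t], of "cube n" A] image_symdiff_cube[OF t] by simp
  ultimately show ?thesis using ext nbhd_minimal_image_symdiff[OF t] unfolding extremal_def by auto
qed

lemma image_symdiff_hball:
  assumes t: "t \<in> cube n"
  shows "(\<lambda>x. symdiff x t) ` hball n t \<rho> = cube_below n (nat (\<rho> + 1))"
proof (intro equalityI subsetI)
  have hdist_eq: "hdist t x = card (symdiff x t)" for x
    unfolding hdist_def symdiff_def by (simp add: Un_commute)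
  have card_iff: "int c \<le> \<rho> \<longleftrightarrow> c < nat (\<rho> + 1)" for c by linarith
  {
    fix y assume "y \<in> (\<lambda>x. symdiff x t) ` hball n t \<rho>"
    then obtain x where x: "x \<in> cube n" "int (hdist t x) \<le> \<rho>" "y = symdiff x t"
      unfolding hball_def by blast
    then show "y \<in> cube_below n (nat (\<rho> + 1))"
      using hdist_eq card_iff symdiff_mem_cube[OF t] unfolding cube_below_def by simp
  next
    fix y assume y: "y \<in> cube_below n (nat (\<rho> + 1))"
    have "hdist t (symdiff y t) = card y" using hdist_eq[of "symdiff y t"] by simp
    then have "symdiff y t \<in> hball n t \<rho>"
      using y card_iff symdiff_mem_cube[OF t] unfolding cube_below_def hball_def by simp
    then show "y \<in> (\<lambda>x. symdiff x t) ` hball n t \<rho>" by (rule rev_image_eqI) simp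
  }
qed

lemma image_symdiff_inj: "inj p \<Longrightarrow> p ` symdiff x t = symdiff (p ` x) (p ` t)"
  unfolding symdiff_def by (simp add: image_Un image_set_diff)

theorem proposition6:
  fixes n :: nat and A :: "nat set set" and t :: "nat set" and r :: int
  assumes "extremal n A"
    and "t \<in> cube n"
    and "hball n t r \<subseteq> A" and "A \<subseteq> hball n t (r + 1)"
  shows "\<exists>S. sim_initial_segment n S \<and> cube_isomorphic n A S"
proof -
  let ?A = "(\<lambda>x. symdiff x t) ` A"
  have "cube_below n (nat (r + 1)) \<subseteq> ?A"
    using image_mono[OF assms(3), of "\<lambda>x. symdiff x t"] image_symdiff_hball[OF assms(2)] by simp
  moreover have "?A \<subseteq> cube_below n (Suc (nat (r + 1)))"
    using image_mono[OF assms(4), of "\<lambda>x. symdiff x t"] image_symdiff_hball[OF assms(2)]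
    unfolding cube_below_def by auto
  ultimately obtain p where p: "p permutes {1..n}" "sim_initial_segment n (image p ` ?A)"
    using extremal_between_layers[OF extremal_image_symdiff[OF assms(1,2)]] by blast
  have "p ` t \<subseteq> {1..n}" using assms(2) permutes_image[OF p(1)] unfolding cube_def by blast
  then have "cube_aut n (\<lambda>x. symdiff (p ` x) (p ` t))"
    unfolding cube_aut_def using p(1) by blast
  moreover have "(\<lambda>x. symdiff (p ` x) (p ` t)) ` A = image p ` ?A"
    using image_symdiff_inj[OF permutes_inj[OF p(1)]] by (simp add: image_image)
  ultimately show ?thesis using p(2) unfolding cube_isomorphic_def by blast
qed

end
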